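(* Let $\tau$ be a pure parabolic isometry of $\mathbb{H}^4$ with fixed point $v\in\widehat{\mathbb{R}^3}$. Then a circle $c$ in $\widehat{\mathbb{R}^3}$ satisfies $v\in c\subset h$ for some $h\in\mathcal{F}_\tau$ if and only if $c\in\mathcal{K}_\tau$.
   Context: Identify $\partial\mathbb{H}^4$ with $\widehat{\mathbb{R}^3}=\mathbb{R}^3\cup\{\infty\}$; circles include Euclidean lines with $\infty$ added. A pure parabolic isometry is a composition of reflections in two hyperplanes tangent at a unique point at infinity. After conjugation by a Möbius map $\phi$ sending $v$ to $\infty$, its boundary action is $x\mapsto x+b$ with $b\neq0$. The permuted pencil $\mathcal{F}_\tau$ is the image under $\phi^{-1}$ of the set of Euclidean planes orthogonal to $b$ (with $\infty$ added). The invariant pencil $\mathcal{T}_\tau$ is the image under $\phi^{-1}$ of the set of Euclidean planes parallel to $b$ (with $\infty$ added). The half-turn bank is $\mathcal{K}_\tau=\{s\cap t: s\in\mathcal{F}_\tau,\ t\in\mathcal{T}_\tau\}$. *)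

theory Defs
  imports "HOL-Analysis.Analysis"
begin

text \<open>The boundary sphere of H^4 is the one-point compactification of R^3;
  None plays the role of the point at infinity.\<close>
type_synonym ext3 = "(real^3) option"

definition sphere_inversion :: "real^3 \<Rightarrow> real \<Rightarrow> ext3 \<Rightarrow> ext3" where
  "sphere_inversion a r p = (case p of
      None \<Rightarrow> Some a
    | Some x \<Rightarrow> (if x = a then None
                 else Some (a + (r\<^sup>2 / (norm (x - a))\<^sup>2) *\<^sub>R (x - a))))"

definition plane_reflection :: "real^3 \<Rightarrow> real \<Rightarrow> ext3 \<Rightarrow> ext3" where
  "plane_reflection n d p = (case p of
      None \<Rightarrow> None
    | Some x \<Rightarrow> Some (x - ((2 * (x \<bullet> n - d)) / (n \<bullet> n)) *\<^sub>R n))"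

inductive mobius :: "(ext3 \<Rightarrow> ext3) \<Rightarrow> bool" where
  mobius_id: "mobius id"
| mobius_inv: "r > 0 \<Longrightarrow> mobius f \<Longrightarrow> mobius (sphere_inversion a r \<circ> f)"
| mobius_refl: "n \<noteq> 0 \<Longrightarrow> mobius f \<Longrightarrow> mobius (plane_reflection n d \<circ> f)"

definition ext_circle :: "ext3 set \<Rightarrow> bool" where
  "ext_circle c \<longleftrightarrow>
     (\<exists>a r n. r > 0 \<and> n \<noteq> 0 \<and>
        c = Some ` {x. norm (x - a) = r \<and> (x - a) \<bullet> n = 0})
   \<or> (\<exists>p u. u \<noteq> 0 \<and> c = insert None (Some ` {p + t *\<^sub>R u | t. True}))"

definition ext_plane :: "real^3 \<Rightarrow> real \<Rightarrow> ext3 set" where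
  "ext_plane n d = insert None (Some ` {x. x \<bullet> n = d})"

definition ext_translate :: "real^3 \<Rightarrow> ext3 \<Rightarrow> ext3" where
  "ext_translate b p = map_option (\<lambda>x. x + b) p"

text \<open>Permuted pencil: images under phi^{-1} (= preimages under the bijection phi)
  of the planes orthogonal to b.\<close>
definition permuted_pencil :: "(ext3 \<Rightarrow> ext3) \<Rightarrow> real^3 \<Rightarrow> ext3 set set" where
  "permuted_pencil \<phi> b = {\<phi> -` ext_plane b d | d. True}"

definition invariant_pencil :: "(ext3 \<Rightarrow> ext3) \<Rightarrow> real^3 \<Rightarrow> ext3 set set" where
  "invariant_pencil \<phi> b = {\<phi> -` ext_plane n d | n d. n \<noteq> 0 \<and> n \<bullet> b = 0}"

definition half_turn_bank :: "(ext3 \<Rightarrow> ext3) \<Rightarrow> real^3 \<Rightarrow> ext3 set set" where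
  "half_turn_bank \<phi> b = {s \<inter> t | s t. s \<in> permuted_pencil \<phi> b \<and> t \<in> invariant_pencil \<phi> b}"

end

theory Submission
  imports Defs "HOL-Analysis.Cross3"
begin

text \<open>A circle of the extended \<open>\<real>\<^sup>3\<close> is the transversal intersection of two generalised spheres
  \<open>\<alpha>|x|\<^sup>2 + w\<bullet>x + \<beta> = 0\<close>, transversality being positivity of the Gram determinant of the
  two coefficient vectors \<open>(\<alpha>, w, \<beta>)\<close> for the Lorentzian form \<open>|w|\<^sup>2 - 4\<alpha>\<beta>\<close>.
  Translations, inversions about the origin and linear reflections act on coefficient vectors
  by similarities of this form, so every Moebius map sends circles to circles.
  If \<open>v \<in> c\<close> then \<open>\<phi> ` c\<close> passes through \<open>\<infinity>\<close>, so both spheres are planes and \<open>\<phi> ` c\<close> is a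
  line; a line inside a plane orthogonal to \<open>b\<close> is cut out of that plane by a second plane
  parallel to \<open>b\<close>. Conversely every member of the bank contains \<open>v = \<phi>\<inverse> \<infinity>\<close>.\<close>

unbundle cross3_syntax

section \<open>Generalised spheres and circles\<close>

text \<open>\<open>sphere_pairing\<close> is the polarisation of the Lorentzian form \<open>|w|\<^sup>2 - 4\<alpha>\<beta>\<close> on
  coefficient vectors; the strict Gram inequality in \<open>gen_circle\<close> excludes tangent, disjoint
  and coincident pairs, leaving exactly the Euclidean circles and the lines through \<open>\<infinity>\<close>.\<close>

type_synonym sphere_coeffs = "real \<times> (real^3) \<times> real"

fun gen_sphere :: "sphere_coeffs \<Rightarrow> ext3 set" where
  "gen_sphere (\<alpha>, w, \<beta>) =
     {p. case p of None \<Rightarrow> \<alpha> = 0 | Some x \<Rightarrow> \<alpha> * (x \<bullet> x) + w \<bullet> x + \<beta> = 0}"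

fun sphere_pairing :: "sphere_coeffs \<Rightarrow> sphere_coeffs \<Rightarrow> real" where
  "sphere_pairing (\<alpha>1, w1, \<beta>1) (\<alpha>2, w2, \<beta>2) = w1 \<bullet> w2 - 2 * (\<alpha>1 * \<beta>2 + \<alpha>2 * \<beta>1)"

definition gen_circle :: "ext3 set \<Rightarrow> bool" where
  "gen_circle C \<longleftrightarrow> (\<exists>s1 s2. C = gen_sphere s1 \<inter> gen_sphere s2 \<and>
     (sphere_pairing s1 s2)\<^sup>2 < sphere_pairing s1 s1 * sphere_pairing s2 s2)"

lemma gen_circle_vimage:
  assumes "gen_circle C"
    and vimage: "\<And>s. f -` gen_sphere s = gen_sphere (T s)"
    and pairing: "\<And>s1 s2. sphere_pairing (T s1) (T s2) = k * sphere_pairing s1 s2"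
    and "k \<noteq> 0"
  shows "gen_circle (f -` C)"
proof -
  obtain s1 s2 where C: "C = gen_sphere s1 \<inter> gen_sphere s2"
    and Gram: "(sphere_pairing s1 s2)\<^sup>2 < sphere_pairing s1 s1 * sphere_pairing s2 s2"
    using assms(1) unfolding gen_circle_def by blast
  have "(sphere_pairing (T s1) (T s2))\<^sup>2 = k\<^sup>2 * (sphere_pairing s1 s2)\<^sup>2"
    by (simp add: pairing power_mult_distrib)
  also have "\<dots> < k\<^sup>2 * (sphere_pairing s1 s1 * sphere_pairing s2 s2)"
    using Gram \<open>k \<noteq> 0\<close> by simp
  also have "\<dots> = sphere_pairing (T s1) (T s1) * sphere_pairing (T s2) (T s2)"
    by (simp add: pairing power2_eq_square)
  finally show ?thesis
    unfolding gen_circle_def C vimage_Int vimage by blast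
qed

section \<open>Moebius maps preserve generalised circles\<close>

definition translate_coeffs :: "real^3 \<Rightarrow> sphere_coeffs \<Rightarrow> sphere_coeffs" where
  "translate_coeffs t = (\<lambda>(\<alpha>, w, \<beta>). (\<alpha>, w + (2 * \<alpha>) *\<^sub>R t, \<alpha> * (t \<bullet> t) + w \<bullet> t + \<beta>))"

definition inversion_coeffs :: "real \<Rightarrow> sphere_coeffs \<Rightarrow> sphere_coeffs" where
  "inversion_coeffs r = (\<lambda>(\<alpha>, w, \<beta>). (\<beta>, r\<^sup>2 *\<^sub>R w, \<alpha> * r ^ 4))"

definition reflection_coeffs :: "real^3 \<Rightarrow> sphere_coeffs \<Rightarrow> sphere_coeffs" where
  "reflection_coeffs n = (\<lambda>(\<alpha>, w, \<beta>). (\<alpha>, w - (2 * (w \<bullet> n) / (n \<bullet> n)) *\<^sub>R n, \<beta>))"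

lemma vimage_translate_gen_sphere:
  "ext_translate t -` gen_sphere s = gen_sphere (translate_coeffs t s)"
proof (cases s rule: prod_cases3)
  case (fields \<alpha> w \<beta>)
  have "\<alpha> * ((x + t) \<bullet> (x + t)) + w \<bullet> (x + t) + \<beta>
      = \<alpha> * (x \<bullet> x) + (w + (2 * \<alpha>) *\<^sub>R t) \<bullet> x + (\<alpha> * (t \<bullet> t) + w \<bullet> t + \<beta>)" for x
    by (simp add: inner_add_left inner_add_right inner_commute algebra_simps)
  then show ?thesis
    by (auto simp: fields translate_coeffs_def ext_translate_def split: option.splits)
qed

lemma sphere_pairing_translate_coeffs:
  "sphere_pairing (translate_coeffs t s1) (translate_coeffs t s2) = sphere_pairing s1 s2"
  by (cases s1 rule: prod_cases3; cases s2 rule: prod_cases3)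
    (simp add: translate_coeffs_def inner_add_left inner_add_right inner_commute algebra_simps)

lemma vimage_inversion_gen_sphere:
  assumes "r \<noteq> 0"
  shows "sphere_inversion 0 r -` gen_sphere s = gen_sphere (inversion_coeffs r s)"
proof (cases s rule: prod_cases3)
  case (fields \<alpha> w \<beta>)
  have "\<alpha> * ((r\<^sup>2 / (x \<bullet> x)) *\<^sub>R x \<bullet> (r\<^sup>2 / (x \<bullet> x)) *\<^sub>R x) + w \<bullet> ((r\<^sup>2 / (x \<bullet> x)) *\<^sub>R x) + \<beta>
      = (\<beta> * (x \<bullet> x) + r\<^sup>2 *\<^sub>R w \<bullet> x + \<alpha> * r ^ 4) / (x \<bullet> x)" if "x \<noteq> 0" for x
    using that by (simp add: field_simps power2_eq_square power4_eq_xxxx)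
  then have "sphere_inversion 0 r p \<in> gen_sphere (\<alpha>, w, \<beta>)
      \<longleftrightarrow> p \<in> gen_sphere (\<beta>, r\<^sup>2 *\<^sub>R w, \<alpha> * r ^ 4)" for p
    using assms by (cases p) (auto simp: sphere_inversion_def power2_norm_eq_inner)
  then show ?thesis
    by (auto simp: fields inversion_coeffs_def)
qed

lemma sphere_pairing_inversion_coeffs:
  "sphere_pairing (inversion_coeffs r s1) (inversion_coeffs r s2) = r ^ 4 * sphere_pairing s1 s2"
  by (cases s1 rule: prod_cases3; cases s2 rule: prod_cases3)
    (simp add: inversion_coeffs_def algebra_simps power2_eq_square power4_eq_xxxx)

lemma vimage_reflection_gen_sphere:
  assumes "n \<noteq> 0"
  shows "plane_reflection n 0 -` gen_sphere s = gen_sphere (reflection_coeffs n s)"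
proof (cases s rule: prod_cases3)
  case (fields \<alpha> w \<beta>)
  define R where "R x = x - (2 * (x \<bullet> n) / (n \<bullet> n)) *\<^sub>R n" for x
  have "R x \<bullet> R x = x \<bullet> x" for x
    using assms
    by (simp add: R_def inner_diff_left inner_diff_right inner_commute field_simps power2_eq_square)
  moreover have "w \<bullet> R x = R w \<bullet> x" for x
    by (simp add: R_def inner_diff_left inner_diff_right inner_commute)
  moreover have "plane_reflection n 0 = map_option R"
    by (auto simp: plane_reflection_def R_def fun_eq_iff split: option.splits)
  ultimately show ?thesis
    by (auto simp: fields reflection_coeffs_def R_def[symmetric] split: option.splits)
qed

lemma sphere_pairing_reflection_coeffs:
  assumes "n \<noteq> 0"
  shows "sphere_pairing (reflection_coeffs n s1) (reflection_coeffs n s2) = sphere_pairing s1 s2"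
proof (cases s1 rule: prod_cases3; cases s2 rule: prod_cases3)
  fix \<alpha>1 w1 \<beta>1 \<alpha>2 w2 \<beta>2
  assume "s1 = (\<alpha>1, w1, \<beta>1)" "s2 = (\<alpha>2, w2, \<beta>2)"
  moreover have "(w1 - (2 * (w1 \<bullet> n) / (n \<bullet> n)) *\<^sub>R n) \<bullet> (w2 - (2 * (w2 \<bullet> n) / (n \<bullet> n)) *\<^sub>R n)
      = w1 \<bullet> w2"
    using assms by (simp add: inner_diff_left inner_diff_right inner_commute field_simps)
  ultimately show ?thesis by (simp add: reflection_coeffs_def)
qed

lemma gen_circle_vimage_translate: "gen_circle C \<Longrightarrow> gen_circle (ext_translate t -` C)"
  by (rule gen_circle_vimage[where T = "translate_coeffs t" and k = 1])
    (simp_all add: vimage_translate_gen_sphere sphere_pairing_translate_coeffs)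

lemma sphere_inversion_conj_translate:
  "sphere_inversion a r = ext_translate a \<circ> sphere_inversion 0 r \<circ> ext_translate (- a)"
proof
  show "sphere_inversion a r p
      = (ext_translate a \<circ> sphere_inversion 0 r \<circ> ext_translate (- a)) p" for p
    by (cases p) (simp_all add: sphere_inversion_def ext_translate_def)
qed

lemma plane_reflection_eq_translate_comp:
  assumes "n \<noteq> 0"
  shows "plane_reflection n d = ext_translate ((2 * d / (n \<bullet> n)) *\<^sub>R n) \<circ> plane_reflection n 0"
proof
  show "plane_reflection n d p
      = (ext_translate ((2 * d / (n \<bullet> n)) *\<^sub>R n) \<circ> plane_reflection n 0) p" for p
    by (cases p)
      (simp_all add: plane_reflection_def ext_translate_def algebra_simps diff_divide_distrib)
qed

lemma gen_circle_vimage_sphere_inversion: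
  assumes "r \<noteq> 0" "gen_circle C"
  shows "gen_circle (sphere_inversion a r -` C)"
proof -
  have "gen_circle (sphere_inversion 0 r -` (ext_translate a -` C))"
  proof (rule gen_circle_vimage[where T = "inversion_coeffs r" and k = "r ^ 4"])
    show "gen_circle (ext_translate a -` C)" using assms(2) by (rule gen_circle_vimage_translate)
  qed (use assms(1) in \<open>simp_all add: vimage_inversion_gen_sphere sphere_pairing_inversion_coeffs\<close>)
  then have "gen_circle (ext_translate (- a) -` sphere_inversion 0 r -` ext_translate a -` C)"
    by (rule gen_circle_vimage_translate)
  then show ?thesis
    by (simp only: sphere_inversion_conj_translate[of a r] vimage_comp)
qed

lemma gen_circle_vimage_plane_reflection:
  assumes "n \<noteq> 0" "gen_circle C"
  shows "gen_circle (plane_reflection n d -` C)"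
proof -
  have "gen_circle (plane_reflection n 0 -` ext_translate ((2 * d / (n \<bullet> n)) *\<^sub>R n) -` C)"
  proof (rule gen_circle_vimage[where T = "reflection_coeffs n" and k = 1])
    show "gen_circle (ext_translate ((2 * d / (n \<bullet> n)) *\<^sub>R n) -` C)"
      using assms(2) by (rule gen_circle_vimage_translate)
  qed (use assms(1) in
      \<open>simp_all add: vimage_reflection_gen_sphere sphere_pairing_reflection_coeffs\<close>)
  then show ?thesis
    by (simp only: plane_reflection_eq_translate_comp[OF assms(1), of d] vimage_comp)
qed

lemma sphere_inversion_involution:
  assumes "r \<noteq> 0"
  shows "sphere_inversion a r (sphere_inversion a r p) = p"
proof (cases p)
  case (Some x)
  show ?thesis
  proof (cases "x = a")
    case False
    define k where "k = r\<^sup>2 / (norm (x - a))\<^sup>2"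
    have "k \<noteq> 0"
      using assms False by (simp add: k_def)
    have "(norm (k *\<^sub>R (x - a)))\<^sup>2 = k * (k * (norm (x - a))\<^sup>2)"
      by (simp add: power_mult_distrib power2_eq_square)
    also have "k * (norm (x - a))\<^sup>2 = r\<^sup>2"
      using False by (simp add: k_def)
    finally have "r\<^sup>2 / (norm (k *\<^sub>R (x - a)))\<^sup>2 * k = 1"
      using assms \<open>k \<noteq> 0\<close> by simp
    then show ?thesis
      using assms \<open>k \<noteq> 0\<close> Some False by (simp add: sphere_inversion_def k_def[symmetric])
  qed (simp add: Some sphere_inversion_def)
qed (simp add: sphere_inversion_def)

lemma plane_reflection_involution:
  assumes "n \<noteq> 0"
  shows "plane_reflection n d (plane_reflection n d p) = p"
proof (cases p)
  case (Some x)
  define c where "c = 2 * (x \<bullet> n - d) / (n \<bullet> n)"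
  have reflect: "plane_reflection n d (Some y) = Some (y - (2 * (y \<bullet> n - d) / (n \<bullet> n)) *\<^sub>R n)" for y
    by (simp add: plane_reflection_def)
  have "2 * ((x - c *\<^sub>R n) \<bullet> n - d) / (n \<bullet> n) = - c"
    using assms by (simp add: c_def inner_diff_left field_simps)
  then have "plane_reflection n d (plane_reflection n d p) = Some (x - c *\<^sub>R n - (- c) *\<^sub>R n)"
    by (simp only: Some reflect c_def[symmetric])
  then show ?thesis
    by (simp add: Some)
qed (simp add: plane_reflection_def)

lemma involution_image_eq_vimage: "(\<And>x. f (f x) = x) \<Longrightarrow> f ` A = f -` A"
  by (metis bij_vimage_eq_inv_image involuntory_imp_bij inv_equality)

lemma mobius_inj: "mobius \<phi> \<Longrightarrow> inj \<phi>"
proof (induction rule: mobius.induct)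
  case (mobius_inv r f a)
  then have "bij (sphere_inversion a r)"
    by (simp add: involuntory_imp_bij sphere_inversion_involution)
  then show ?case
    by (rule inj_compose[OF bij_is_inj mobius_inv.IH])
next
  case (mobius_refl n f d)
  then have "bij (plane_reflection n d)"
    by (simp add: involuntory_imp_bij plane_reflection_involution)
  then show ?case
    by (rule inj_compose[OF bij_is_inj mobius_refl.IH])
qed simp

lemma gen_circle_image_mobius: "mobius \<phi> \<Longrightarrow> gen_circle C \<Longrightarrow> gen_circle (\<phi> ` C)"
proof (induction rule: mobius.induct)
  case (mobius_inv r f a)
  then show ?case
    unfolding image_comp[symmetric]
    by (simp add: involution_image_eq_vimage sphere_inversion_involution
        gen_circle_vimage_sphere_inversion)
next
  case (mobius_refl n f d)
  then show ?case
    unfolding image_comp[symmetric]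
    by (simp add: involution_image_eq_vimage plane_reflection_involution
        gen_circle_vimage_plane_reflection)
qed simp

section \<open>Lines as intersections of planes\<close>

lemma plane_pair_solvable:
  fixes v1 v2 :: "real^3"
  assumes "v1 \<times> v2 \<noteq> 0"
  shows "\<exists>p. p \<bullet> v1 = e1 \<and> p \<bullet> v2 = e2"
proof -
  define u where "u = v1 \<times> v2"
  \<comment> \<open>Cramer's rule, written with cross products\<close>
  define p where "p = (1 / (u \<bullet> u)) *\<^sub>R (e1 *\<^sub>R (v2 \<times> u) - e2 *\<^sub>R (v1 \<times> u))"
  have "(v2 \<times> u) \<bullet> v1 = u \<bullet> u" "(v1 \<times> u) \<bullet> v2 = - (u \<bullet> u)"
    unfolding u_def by (metis cross_triple cross_skew inner_minus_left)+
  moreover have "(v1 \<times> u) \<bullet> v1 = 0" "(v2 \<times> u) \<bullet> v2 = 0"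
    by (simp_all add: dot_cross_self)
  moreover have "u \<bullet> u \<noteq> 0"
    using assms by (simp add: u_def)
  ultimately have "p \<bullet> v1 = e1 \<and> p \<bullet> v2 = e2"
    by (simp add: p_def inner_diff_left)
  then show ?thesis ..
qed

lemma plane_pair_Int_eq_line:
  fixes v1 v2 p :: "real^3"
  assumes "v1 \<times> v2 \<noteq> 0" "p \<bullet> v1 = e1" "p \<bullet> v2 = e2"
  shows "{x. x \<bullet> v1 = e1 \<and> x \<bullet> v2 = e2} = {p + t *\<^sub>R (v1 \<times> v2) | t. True}"
proof (intro set_eqI iffI)
  fix x assume "x \<in> {x. x \<bullet> v1 = e1 \<and> x \<bullet> v2 = e2}"
  then have "(x - p) \<bullet> v1 = 0" "(x - p) \<bullet> v2 = 0"
    using assms by (simp_all add: inner_diff_left)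
  define w where "w = v1 \<times> v2"
  have "w \<times> (x - p) = 0"
    using Lagrange[of "x - p" v1 v2] \<open>(x - p) \<bullet> v1 = 0\<close> \<open>(x - p) \<bullet> v2 = 0\<close>
    by (metis cross_skew w_def minus_zero scale_zero_left diff_zero)
  then have parallel: "(w \<bullet> w) *\<^sub>R (x - p) = (w \<bullet> (x - p)) *\<^sub>R w"
    using Lagrange[of w w "x - p"] by simp
  have "w \<bullet> w \<noteq> 0"
    using assms(1) by (simp add: w_def)
  then have "x - p = (1 / (w \<bullet> w)) *\<^sub>R ((w \<bullet> w) *\<^sub>R (x - p))"
    by simp
  also have "\<dots> = ((w \<bullet> (x - p)) / (w \<bullet> w)) *\<^sub>R w"
    by (simp add: parallel)
  finally have "x = p + ((w \<bullet> (x - p)) / (w \<bullet> w)) *\<^sub>R w"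
    by (simp add: algebra_simps)
  then show "x \<in> {p + t *\<^sub>R (v1 \<times> v2) | t. True}"
    unfolding w_def by blast
next
  fix x assume "x \<in> {p + t *\<^sub>R (v1 \<times> v2) | t. True}"
  then show "x \<in> {x. x \<bullet> v1 = e1 \<and> x \<bullet> v2 = e2}"
    using assms by (auto simp: inner_add_left dot_cross_self)
qed

lemma gen_sphere_linear_eq_ext_plane: "gen_sphere (0, w, - e) = ext_plane w e"
  by (auto simp: ext_plane_def inner_commute split: option.splits)

lemma ext_plane_Int_ext_plane:
  "ext_plane v1 e1 \<inter> ext_plane v2 e2
    = insert None (Some ` {x. x \<bullet> v1 = e1 \<and> x \<bullet> v2 = e2})"
  by (auto simp: ext_plane_def)

lemma gen_circle_plane_pair:
  assumes "v1 \<times> v2 \<noteq> 0"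
  shows "gen_circle (ext_plane v1 e1 \<inter> ext_plane v2 e2)"
proof -
  have "0 < (v1 \<times> v2) \<bullet> (v1 \<times> v2)"
    using assms by simp
  then have "(v1 \<bullet> v2)\<^sup>2 < (v1 \<bullet> v1) * (v2 \<bullet> v2)"
    by (simp add: dot_cross inner_commute power2_eq_square)
  then show ?thesis
    unfolding gen_circle_def gen_sphere_linear_eq_ext_plane[symmetric] by fastforce
qed

lemma gen_circle_through_infinity:
  assumes "gen_circle C" "None \<in> C"
  shows "\<exists>v1 e1 v2 e2. v1 \<times> v2 \<noteq> 0 \<and> C = ext_plane v1 e1 \<inter> ext_plane v2 e2"
proof -
  obtain \<alpha>1 v1 \<beta>1 \<alpha>2 v2 \<beta>2 where C: "C = gen_sphere (\<alpha>1, v1, \<beta>1) \<inter> gen_sphere (\<alpha>2, v2, \<beta>2)"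
    and Gram: "(sphere_pairing (\<alpha>1, v1, \<beta>1) (\<alpha>2, v2, \<beta>2))\<^sup>2
      < sphere_pairing (\<alpha>1, v1, \<beta>1) (\<alpha>1, v1, \<beta>1) * sphere_pairing (\<alpha>2, v2, \<beta>2) (\<alpha>2, v2, \<beta>2)"
    using assms(1) unfolding gen_circle_def by (metis prod_cases3)
  have "\<alpha>1 = 0" "\<alpha>2 = 0"
    using assms(2) C by auto
  then have "C = ext_plane v1 (- \<beta>1) \<inter> ext_plane v2 (- \<beta>2)"
    using C gen_sphere_linear_eq_ext_plane[of v1 "- \<beta>1"]
      gen_sphere_linear_eq_ext_plane[of v2 "- \<beta>2"] by simp
  moreover have "v1 \<times> v2 \<noteq> 0"
    using Gram \<open>\<alpha>1 = 0\<close> \<open>\<alpha>2 = 0\<close> dot_cross[of v1 v2 v1 v2]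
    by (auto simp: inner_commute power2_eq_square)
  ultimately show ?thesis by blast
qed

lemma gen_circle_euclidean_circle:
  assumes "r > 0" "n \<noteq> 0"
  shows "gen_circle (Some ` {x. norm (x - a) = r \<and> (x - a) \<bullet> n = 0})"
proof -
  define s1 :: sphere_coeffs where "s1 = (1, -2 *\<^sub>R a, a \<bullet> a - r\<^sup>2)"
  define s2 :: sphere_coeffs where "s2 = (0, n, - (a \<bullet> n))"
  have "norm (x - a) = r \<longleftrightarrow> (x - a) \<bullet> (x - a) = r\<^sup>2" for x
    using assms(1) by (metis norm_ge_zero power2_eq_iff_nonneg less_imp_le power2_norm_eq_inner)
  then have "Some ` {x. norm (x - a) = r \<and> (x - a) \<bullet> n = 0} = gen_sphere s1 \<inter> gen_sphere s2"
    by (auto simp: s1_def s2_def inner_diff_left inner_diff_right inner_commute algebra_simps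
        split: option.splits)
  moreover have "(sphere_pairing s1 s2)\<^sup>2 < sphere_pairing s1 s1 * sphere_pairing s2 s2"
    using assms by (simp add: s1_def s2_def inner_commute algebra_simps)
  ultimately show ?thesis
    unfolding gen_circle_def by blast
qed

lemma gen_circle_euclidean_line:
  assumes "u \<noteq> 0"
  shows "gen_circle (insert None (Some ` {p + t *\<^sub>R u | t. True}))"
proof -
  obtain v1 where "v1 \<noteq> 0" "v1 \<bullet> u = 0"
    using cross_basis_nonzero[OF assms] dot_cross_self by metis
  define v2 where "v2 = (1 / (v1 \<bullet> v1)) *\<^sub>R (u \<times> v1)"
  have "v1 \<times> v2 = u"
    using \<open>v1 \<noteq> 0\<close> \<open>v1 \<bullet> u = 0\<close> by (simp add: v2_def cross_mult_right Lagrange)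
  then have "insert None (Some ` {p + t *\<^sub>R u | t. True})
      = ext_plane v1 (p \<bullet> v1) \<inter> ext_plane v2 (p \<bullet> v2)"
    using assms by (simp add: ext_plane_Int_ext_plane plane_pair_Int_eq_line)
  then show ?thesis
    using gen_circle_plane_pair \<open>v1 \<times> v2 = u\<close> assms by simp
qed

lemma ext_circle_imp_gen_circle: "ext_circle c \<Longrightarrow> gen_circle c"
  unfolding ext_circle_def using gen_circle_euclidean_circle gen_circle_euclidean_line by blast

lemma plane_pair_subset_plane_eq_Int:
  assumes "v1 \<times> v2 \<noteq> 0" "b \<noteq> 0"
    and sub: "ext_plane v1 e1 \<inter> ext_plane v2 e2 \<subseteq> ext_plane b d"
  shows "\<exists>n e. n \<noteq> 0 \<and> n \<bullet> b = 0 \<and>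
    ext_plane v1 e1 \<inter> ext_plane v2 e2 = ext_plane b d \<inter> ext_plane n e"
proof -
  obtain p where "p \<bullet> v1 = e1" "p \<bullet> v2 = e2"
    using plane_pair_solvable[OF assms(1)] by blast
  define u where "u = v1 \<times> v2"
  have line: "ext_plane v1 e1 \<inter> ext_plane v2 e2 = insert None (Some ` {p + t *\<^sub>R u | t. True})"
    using assms(1) \<open>p \<bullet> v1 = e1\<close> \<open>p \<bullet> v2 = e2\<close>
    by (simp add: u_def ext_plane_Int_ext_plane plane_pair_Int_eq_line)
  have "Some (p + 0 *\<^sub>R u) \<in> ext_plane b d" "Some (p + 1 *\<^sub>R u) \<in> ext_plane b d"
    using sub unfolding line by blast+
  then have "p \<bullet> b = d" "u \<bullet> b = 0"
    by (auto simp: ext_plane_def inner_add_left)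
  define n where "n = (1 / (b \<bullet> b)) *\<^sub>R (u \<times> b)"
  have "b \<times> n = u"
    using assms(2) \<open>u \<bullet> b = 0\<close> by (simp add: n_def cross_mult_right Lagrange inner_commute)
  then have "n \<noteq> 0"
    using assms(1) by (auto simp: u_def)
  moreover have "n \<bullet> b = 0"
    by (simp add: n_def dot_cross_self)
  moreover have "ext_plane b d \<inter> ext_plane n (p \<bullet> n) = insert None (Some ` {p + t *\<^sub>R u | t. True})"
    using plane_pair_Int_eq_line[of b n p d "p \<bullet> n"] \<open>b \<times> n = u\<close> assms(1) \<open>p \<bullet> b = d\<close>
    by (simp add: u_def ext_plane_Int_ext_plane)
  ultimately show ?thesis
    using line by metis
qed

theorem theorem5p8:
  fixes \<tau> \<phi> :: "ext3 \<Rightarrow> ext3" and v :: ext3 and b :: "real^3" and c :: "ext3 set"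
  assumes "mobius \<phi>"
    and "\<phi> v = None"
    and "b \<noteq> 0"
    and "\<And>p. \<phi> (\<tau> p) = ext_translate b (\<phi> p)"
    and "ext_circle c"
  shows "(v \<in> c \<and> (\<exists>h \<in> permuted_pencil \<phi> b. c \<subseteq> h)) \<longleftrightarrow> c \<in> half_turn_bank \<phi> b"
proof
  assume "v \<in> c \<and> (\<exists>h \<in> permuted_pencil \<phi> b. c \<subseteq> h)"
  then obtain d where "v \<in> c" and "\<phi> ` c \<subseteq> ext_plane b d"
    unfolding permuted_pencil_def by blast
  moreover have "gen_circle (\<phi> ` c)"
    using assms(1,5) by (simp add: gen_circle_image_mobius ext_circle_imp_gen_circle)
  ultimately obtain v1 e1 v2 e2 where "v1 \<times> v2 \<noteq> 0" "\<phi> ` c = ext_plane v1 e1 \<inter> ext_plane v2 e2"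
    using gen_circle_through_infinity assms(2) by (metis image_eqI)
  then obtain n e where "n \<noteq> 0" "n \<bullet> b = 0" "\<phi> ` c = ext_plane b d \<inter> ext_plane n e"
    using plane_pair_subset_plane_eq_Int assms(3) \<open>\<phi> ` c \<subseteq> ext_plane b d\<close> by metis
  moreover have "c = \<phi> -` (\<phi> ` c)"
    using mobius_inj[OF assms(1)] by (simp add: inj_vimage_image_eq)
  ultimately show "c \<in> half_turn_bank \<phi> b"
    unfolding half_turn_bank_def permuted_pencil_def invariant_pencil_def by auto
next
  assume "c \<in> half_turn_bank \<phi> b"
  then obtain h t where "c = h \<inter> t" "h \<in> permuted_pencil \<phi> b" "t \<in> invariant_pencil \<phi> b"
    unfolding half_turn_bank_def by blast
  moreover have "v \<in> \<phi> -` ext_plane w e" for w e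
    using assms(2) by (simp add: ext_plane_def)
  ultimately show "v \<in> c \<and> (\<exists>h \<in> permuted_pencil \<phi> b. c \<subseteq> h)"
    unfolding permuted_pencil_def invariant_pencil_def by blast
qed

end
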